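(* For $p\in\mathbb{N}$ consider the grid with vertex set $\{0,\dots,p\}^2$ and segment set $\mathcal{S}_p$ of directed edges between adjacent vertices. Let $0<\alpha\le1$ and let $Y_p\sim\mu_p$, where origin $x_1$ and destination $x_2$ are independent, each with $\mathbb{P}[X=(i,j)]=\prod_{k\in\{i,j\}}\binom{p}{k}B(\alpha+k,\alpha+p-k)/B(\alpha,\alpha)$, and given $(x_1,x_2)$ the route is drawn uniformly among routes from $x_1$ to $x_2$ with exactly $\|x_1-x_2\|_1$ segments and the minimum possible number of turns. Then for every segment $s\in\mathcal{S}_p$, $$p^{-1-\alpha}\lesssim q_s=\mathbb{P}[s\in Y_p]\lesssim p^{-\alpha}.$$
   Context: $B(\cdot,\cdot)$ is the beta function. $f\lesssim g$ means $f(p)\le c\,g(p)$ for a constant $c>0$ not depending on $p$ or on $s$. *)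

theory Defs
  imports "HOL-Analysis.Analysis"
begin

type_synonym vtx = "int \<times> int"

definition grid :: "nat \<Rightarrow> vtx set" where
  "grid p = {0..int p} \<times> {0..int p}"

definition adj :: "vtx \<Rightarrow> vtx \<Rightarrow> bool" where
  "adj u v \<longleftrightarrow> \<bar>fst u - fst v\<bar> + \<bar>snd u - snd v\<bar> = 1"

definition segments :: "nat \<Rightarrow> (vtx \<times> vtx) set" where
  "segments p = {(u, v). u \<in> grid p \<and> v \<in> grid p \<and> adj u v}"

definition l1dist :: "vtx \<Rightarrow> vtx \<Rightarrow> nat" where
  "l1dist u v = nat (\<bar>fst u - fst v\<bar> + \<bar>snd u - snd v\<bar>)"

definition is_route :: "nat \<Rightarrow> vtx \<Rightarrow> vtx \<Rightarrow> vtx list \<Rightarrow> bool" where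
  "is_route p x y vs \<longleftrightarrow> vs \<noteq> [] \<and> hd vs = x \<and> last vs = y \<and> set vs \<subseteq> grid p \<and>
     (\<forall>k. k + 1 < length vs \<longrightarrow> adj (vs ! k) (vs ! (k + 1)))"

definition turns :: "vtx list \<Rightarrow> nat" where
  "turns vs = card {k. 0 < k \<and> k + 1 < length vs \<and>
     (fst (vs ! (k + 1)) - fst (vs ! k), snd (vs ! (k + 1)) - snd (vs ! k)) \<noteq>
     (fst (vs ! k) - fst (vs ! (k - 1)), snd (vs ! k) - snd (vs ! (k - 1)))}"

definition shortest_routes :: "nat \<Rightarrow> vtx \<Rightarrow> vtx \<Rightarrow> vtx list set" where
  "shortest_routes p x y = {vs. is_route p x y vs \<and> length vs = l1dist x y + 1}"

definition min_turn_routes :: "nat \<Rightarrow> vtx \<Rightarrow> vtx \<Rightarrow> vtx list set" where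
  "min_turn_routes p x y =
     {vs \<in> shortest_routes p x y. \<forall>ws \<in> shortest_routes p x y. turns vs \<le> turns ws}"

definition route_segs :: "vtx list \<Rightarrow> (vtx \<times> vtx) set" where
  "route_segs vs = {(vs ! k, vs ! (k + 1)) | k. k + 1 < length vs}"

definition marg :: "nat \<Rightarrow> real \<Rightarrow> nat \<Rightarrow> real" where
  "marg p \<alpha> k = real (p choose k) * Beta (\<alpha> + real k) (\<alpha> + real p - real k) / Beta \<alpha> \<alpha>"

definition endpoint_prob :: "nat \<Rightarrow> real \<Rightarrow> vtx \<Rightarrow> real" where
  "endpoint_prob p \<alpha> v = marg p \<alpha> (nat (fst v)) * marg p \<alpha> (nat (snd v))"

definition seg_prob :: "nat \<Rightarrow> real \<Rightarrow> vtx \<times> vtx \<Rightarrow> real" where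
  "seg_prob p \<alpha> s = (\<Sum>x\<in>grid p. \<Sum>y\<in>grid p.
      endpoint_prob p \<alpha> x * endpoint_prob p \<alpha> y *
      (real (card {vs \<in> min_turn_routes p x y. s \<in> route_segs vs})
        / real (card (min_turn_routes p x y))))"

end

theory Submission
  imports Defs "HOL-Real_Asymp.Real_Asymp"
begin

text \<open>
  Each endpoint coordinate is beta-binomial, and Gamma(n + c) ~ n! (n + 1)^(c - 1) shows that its
  k-th weight is (k + 1)^(\<alpha> - 1) (p - k + 1)^(\<alpha> - 1) / (p + 1)^(2\<alpha> - 1) up to constant factors:
  every weight lies between c / p and C p^(-\<alpha>), and the weights of 0 and p are of order p^(-\<alpha>).

  A shortest route with the fewest turns turns at most once, so a horizontal segment on it lies in
  the row of its origin or of its destination; hence q_s is at most twice the largest weight.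
  Conversely, put the origin in the row of s on one side of s and the destination beyond s in
  another row: then there are at most two minimal routes, and the one that starts horizontally
  uses s. Of the two sides of s, one holds half of the row (total weight at least c / 2) and the
  other an end of the row (weight of order p^(-\<alpha>)), so these pairs of endpoints have probability
  of order p^(-1) p^(-\<alpha>). Vertical segments reduce to horizontal ones by swapping coordinates.
\<close>

section \<open>The beta-binomial marginal\<close>

lemma sum_choose_Suc:
  fixes g :: "nat \<Rightarrow> 'a::comm_semiring_1"
  shows "(\<Sum>k\<le>Suc p. of_nat (Suc p choose k) * g k)
       = (\<Sum>k\<le>p. of_nat (p choose k) * g k) + (\<Sum>k\<le>p. of_nat (p choose k) * g (Suc k))"
proof -
  have "(\<Sum>k\<le>Suc p. of_nat (Suc p choose k) * g k)
      = g 0 + (\<Sum>k\<le>p. of_nat (p choose Suc k) * g (Suc k)) + (\<Sum>k\<le>p. of_nat (p choose k) * g (Suc k))"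
    by (subst sum.atMost_Suc_shift) (simp add: sum.distrib distrib_right add_ac)
  also have "g 0 + (\<Sum>k\<le>p. of_nat (p choose Suc k) * g (Suc k)) = (\<Sum>k\<le>Suc p. of_nat (p choose k) * g k)"
    by (simp only: sum.atMost_Suc_shift) simp
  also have "\<dots> = (\<Sum>k\<le>p. of_nat (p choose k) * g k)"
    by (simp add: binomial_eq_0)
  finally show ?thesis .
qed

lemma Beta_binomial_sum:
  fixes a b :: real
  assumes "a > 0" "b > 0"
  shows "(\<Sum>k\<le>p. real (p choose k) * Beta (a + real k) (b + real p - real k)) = Beta a b"
  using assms
proof (induction p arbitrary: a b)
  case 0
  then show ?case by simp
next
  case (Suc p)
  have "(\<Sum>k\<le>Suc p. real (Suc p choose k) * Beta (a + real k) (b + real (Suc p) - real k))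
      = (\<Sum>k\<le>p. real (p choose k) * Beta (a + real k) ((b + 1) + real p - real k))
      + (\<Sum>k\<le>p. real (p choose k) * Beta ((a + 1) + real k) (b + real p - real k))"
    unfolding sum_choose_Suc by (simp add: algebra_simps)
  also have "\<dots> = Beta a (b + 1) + Beta (a + 1) b"
    using Suc by simp
  also have "\<dots> = Beta a b"
    using Beta_plus1_plus1[of a b] Suc.prems by (force elim!: nonpos_Ints_cases)
  finally show ?case .
qed

lemma Beta_real_pos: "a > 0 \<Longrightarrow> b > 0 \<Longrightarrow> Beta a b > (0::real)"
  by (simp add: Beta_def)

lemma sum_marg: "\<alpha> > 0 \<Longrightarrow> (\<Sum>k\<le>p. marg p \<alpha> k) = 1"
  using Beta_binomial_sum[of \<alpha> \<alpha> p] Beta_real_pos[of \<alpha> \<alpha>]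
  by (simp add: marg_def sum_divide_distrib[symmetric])

lemma marg_nonneg: "\<alpha> > 0 \<Longrightarrow> k \<le> p \<Longrightarrow> marg p \<alpha> k \<ge> 0"
  by (simp add: marg_def Beta_def)

lemma marg_symmetric: "k \<le> p \<Longrightarrow> marg p \<alpha> (p - k) = marg p \<alpha> k"
  by (simp add: marg_def of_nat_diff binomial_symmetric[of k p, symmetric] Beta_commute[of "\<alpha> + real k"] add_diff_eq)

definition gamma_fact_ratio :: "real \<Rightarrow> nat \<Rightarrow> real" where
  "gamma_fact_ratio c n = Gamma (real n + c) / (fact n * (real n + 1) powr (c - 1))"

lemma gamma_fact_ratio_pos: "c > 0 \<Longrightarrow> gamma_fact_ratio c n > 0"
  by (simp add: gamma_fact_ratio_def)

lemma gamma_fact_ratio_LIMSEQ: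
  assumes "c > 0"
  shows "gamma_fact_ratio c \<longlonglongrightarrow> 1"
proof -
  have c: "c \<notin> \<int>\<^sub>\<le>\<^sub>0" "Gamma c > 0"
    using assms by (auto elim!: nonpos_Ints_cases)
  \<comment> \<open>\<open>Gamma_series' c n = (n - 1)! n\<^sup>c / pochhammer c n\<close> tends to \<open>Gamma c\<close> (Gauss)\<close>
  have eq: "Gamma c / Gamma_series' c n * (real n powr c / (real n * (real n + 1) powr (c - 1)))
      = gamma_fact_ratio c n" if "n \<ge> 1" for n
  proof -
    have "Gamma c / Gamma_series' c n = Gamma (real n + c) / (fact (n - 1) * real n powr c)"
      using that c by (simp add: Gamma_series'_def pochhammer_Gamma powr_def add.commute)
    moreover have "fact n = real n * fact (n - 1)"
      using that by (simp add: fact_reduce)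
    ultimately show ?thesis
      using that unfolding gamma_fact_ratio_def by (simp add: field_simps)
  qed
  have "(\<lambda>n. real n powr c / (real n * (real n + 1) powr (c - 1))) \<longlonglongrightarrow> 1"
    using assms by real_asymp
  then have "(\<lambda>n. Gamma c / Gamma_series' c n * (real n powr c / (real n * (real n + 1) powr (c - 1))))
          \<longlonglongrightarrow> Gamma c / Gamma c * 1"
    by (intro tendsto_intros Gamma_series'_LIMSEQ) (use c in simp_all)
  then show ?thesis
    using c(2) eq by (auto intro: Lim_transform_eventually eventually_sequentiallyI)
qed

lemma LIMSEQ_pos_imp_bounds:
  fixes f :: "nat \<Rightarrow> real"
  assumes "f \<longlonglongrightarrow> l" "l > 0" "\<And>n. f n > 0"
  obtains L U where "L > 0" "U > 0" "\<And>n. L \<le> f n \<and> f n \<le> U"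
proof -
  have "Bseq f"
    using assms(1) by (rule convergent_imp_Bseq[OF convergentI])
  then obtain U where U: "U > 0" "\<forall>n. norm (f n) \<le> U"
    unfolding Bseq_def by blast
  have "(\<lambda>n. inverse (f n)) \<longlonglongrightarrow> inverse l"
    using assms(1,2) by (intro tendsto_inverse) auto
  then have "Bseq (\<lambda>n. inverse (f n))"
    by (rule convergent_imp_Bseq[OF convergentI])
  then obtain M where M: "M > 0" "\<forall>n. norm (inverse (f n)) \<le> M"
    unfolding Bseq_def by blast
  have "1 / M \<le> f n" for n
    using M(2)[rule_format, of n] M(1) assms(3)[of n] by (simp add: field_simps)
  moreover have "f n \<le> U" for n
    using U(2)[rule_format, of n] by simp
  ultimately show ?thesis
    using U(1) M(1) by (intro that[of "1 / M" U]) auto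
qed

lemma gamma_fact_ratio_bounds:
  assumes "c > 0"
  obtains L U where "L > 0" "U > 0" "\<And>n. L \<le> gamma_fact_ratio c n \<and> gamma_fact_ratio c n \<le> U"
  using LIMSEQ_pos_imp_bounds[OF gamma_fact_ratio_LIMSEQ[OF assms] zero_less_one gamma_fact_ratio_pos[OF assms]]
    that by blast

definition beta_weight :: "real \<Rightarrow> nat \<Rightarrow> nat \<Rightarrow> real" where
  "beta_weight \<alpha> p k =
     (real k + 1) powr (\<alpha> - 1) * (real p - real k + 1) powr (\<alpha> - 1) / (real p + 1) powr (2 * \<alpha> - 1)"

lemma Gamma_eq_gamma_fact_ratio:
  "c > 0 \<Longrightarrow> Gamma (c + real n) = gamma_fact_ratio c n * fact n * (real n + 1) powr (c - 1)"
  by (simp add: gamma_fact_ratio_def add.commute)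

lemma marg_eq_beta_weight:
  assumes "\<alpha> > 0" "k \<le> p"
  shows "marg p \<alpha> k = gamma_fact_ratio \<alpha> k * gamma_fact_ratio \<alpha> (p - k) / gamma_fact_ratio (2 * \<alpha>) p
           * beta_weight \<alpha> p k / Beta \<alpha> \<alpha>"
proof -
  have "Beta (\<alpha> + real k) (\<alpha> + real p - real k)
      = Gamma (\<alpha> + real k) * Gamma (\<alpha> + real (p - k)) / Gamma (2 * \<alpha> + real p)"
    using assms(2) by (simp add: Beta_def of_nat_diff algebra_simps)
  also have "\<dots> = gamma_fact_ratio \<alpha> k * gamma_fact_ratio \<alpha> (p - k) / gamma_fact_ratio (2 * \<alpha>) p
      * (fact k * fact (p - k) / fact p) * beta_weight \<alpha> p k"
    using assms gamma_fact_ratio_pos[of "2 * \<alpha>" p] Gamma_eq_gamma_fact_ratio[OF assms(1), of "p - k"]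
    by (simp add: Gamma_eq_gamma_fact_ratio beta_weight_def of_nat_diff mult_ac)
  finally show ?thesis
    using assms(2) by (simp add: marg_def binomial_fact)
qed

lemma powr_mult_powr_le:
  fixes x y z \<gamma> :: real
  assumes "-1 \<le> \<gamma>" "\<gamma> \<le> 0" "1 \<le> x" "1 \<le> y" "0 < z" "z \<le> x + y"
  shows "x powr \<gamma> * y powr \<gamma> \<le> 2 * z powr \<gamma>"
proof -
  have *: "u powr \<gamma> * v powr \<gamma> \<le> 2 * z powr \<gamma>" if "1 \<le> u" "1 \<le> v" "z / 2 \<le> u" for u v :: real
  proof -
    have "u powr \<gamma> \<le> (z / 2) powr \<gamma>"
      using that assms by (intro powr_mono2') auto
    also have "\<dots> = 2 powr (-\<gamma>) * z powr \<gamma>"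
      using assms by (simp add: powr_divide powr_minus_divide)
    also have "\<dots> \<le> 2 * z powr \<gamma>"
      using powr_mono[of "-\<gamma>" 1 2] assms by (intro mult_right_mono) auto
    finally have "u powr \<gamma> \<le> 2 * z powr \<gamma>" .
    moreover have "v powr \<gamma> \<le> 1"
      using that assms powr_mono2'[of \<gamma> 1 v] by simp
    then have "u powr \<gamma> * v powr \<gamma> \<le> u powr \<gamma>"
      by (intro mult_left_le) auto
    ultimately show ?thesis
      by linarith
  qed
  show ?thesis
  proof (cases "z / 2 \<le> x")
    case True
    then show ?thesis using * assms by blast
  next
    case False
    then show ?thesis
      using *[of y x] assms by (subst mult.commute) simp
  qed
qed

lemma beta_weight_le:
  assumes "0 < \<alpha>" "\<alpha> \<le> 1" "k \<le> p"
  shows "beta_weight \<alpha> p k \<le> 2 * (real p + 1) powr (-\<alpha>)"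
proof -
  have "(real k + 1) powr (\<alpha> - 1) * (real p - real k + 1) powr (\<alpha> - 1) \<le> 2 * (real p + 1) powr (\<alpha> - 1)"
    using assms by (intro powr_mult_powr_le) auto
  then have "beta_weight \<alpha> p k \<le> 2 * (real p + 1) powr (\<alpha> - 1) / (real p + 1) powr (2 * \<alpha> - 1)"
    unfolding beta_weight_def by (rule divide_right_mono) simp
  also have "\<dots> = 2 * (real p + 1) powr ((\<alpha> - 1) - (2 * \<alpha> - 1))"
    by (simp only: powr_diff times_divide_eq_right)
  finally show ?thesis
    by simp
qed

lemma beta_weight_ge:
  assumes "\<alpha> \<le> 1" "k \<le> p"
  shows "1 / (real p + 1) \<le> beta_weight \<alpha> p k"
proof -
  have "(real p + 1) powr (\<alpha> - 1) * (real p + 1) powr (\<alpha> - 1) / (real p + 1) powr (2 * \<alpha> - 1)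
      = (real p + 1) powr ((\<alpha> - 1) + (\<alpha> - 1) - (2 * \<alpha> - 1))"
    by (simp only: powr_add powr_diff)
  then have "1 / (real p + 1)
      = (real p + 1) powr (\<alpha> - 1) * (real p + 1) powr (\<alpha> - 1) / (real p + 1) powr (2 * \<alpha> - 1)"
    by (simp add: powr_minus_divide)
  also have "\<dots> \<le> beta_weight \<alpha> p k"
    unfolding beta_weight_def using assms
    by (intro divide_right_mono mult_mono powr_mono2') auto
  finally show ?thesis .
qed

lemma beta_weight_0: "beta_weight \<alpha> p 0 = (real p + 1) powr (-\<alpha>)"
proof -
  have "beta_weight \<alpha> p 0 = (real p + 1) powr (\<alpha> - 1) / (real p + 1) powr (2 * \<alpha> - 1)"
    by (simp add: beta_weight_def)
  also have "\<dots> = (real p + 1) powr ((\<alpha> - 1) - (2 * \<alpha> - 1))"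
    by (rule powr_diff[symmetric])
  finally show ?thesis
    by simp
qed

lemma marg_bounds:
  assumes "0 < \<alpha>" "\<alpha> \<le> 1"
  obtains K L where "K > 0" "L > 0"
    "\<And>p k. k \<le> p \<Longrightarrow> marg p \<alpha> k \<le> K * (real p + 1) powr (-\<alpha>)"
    "\<And>p k. k \<le> p \<Longrightarrow> L / (real p + 1) \<le> marg p \<alpha> k"
    "\<And>p. L * (real p + 1) powr (-\<alpha>) \<le> marg p \<alpha> 0"
proof -
  have "2 * \<alpha> > 0"
    using assms(1) by simp
  obtain L1 U1 where b1: "L1 > 0" "U1 > 0" "\<And>n. L1 \<le> gamma_fact_ratio \<alpha> n \<and> gamma_fact_ratio \<alpha> n \<le> U1"
    using gamma_fact_ratio_bounds[OF assms(1)] by blast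
  obtain L2 U2 where b2: "L2 > 0" "U2 > 0"
    "\<And>n. L2 \<le> gamma_fact_ratio (2 * \<alpha>) n \<and> gamma_fact_ratio (2 * \<alpha>) n \<le> U2"
    using gamma_fact_ratio_bounds[OF \<open>2 * \<alpha> > 0\<close>] by blast
  define B where "B = Beta \<alpha> \<alpha>"
  have B: "B > 0"
    using assms(1) by (simp add: B_def Beta_real_pos)
  define R where "R p k = gamma_fact_ratio \<alpha> k * gamma_fact_ratio \<alpha> (p - k) / gamma_fact_ratio (2 * \<alpha>) p / B"
    for p k
  define C where "C = U1 * U1 / L2 / B"
  define L where "L = L1 * L1 / U2 / B"
  have marg: "marg p \<alpha> k = R p k * beta_weight \<alpha> p k" if "k \<le> p" for p k
    using marg_eq_beta_weight[OF assms(1) that] by (simp add: R_def B_def)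
  have R_le: "R p k \<le> C" for p k
    unfolding R_def C_def using b1 b2 B gamma_fact_ratio_pos[OF assms(1)] gamma_fact_ratio_pos[OF \<open>2 * \<alpha> > 0\<close>]
    by (intro divide_right_mono frac_le mult_mono) (auto intro: less_imp_le)
  have R_ge: "L \<le> R p k" for p k
    unfolding R_def L_def using b1 b2 B gamma_fact_ratio_pos[OF assms(1)] gamma_fact_ratio_pos[OF \<open>2 * \<alpha> > 0\<close>]
    by (intro divide_right_mono frac_le mult_mono) (auto intro: less_imp_le)
  have pos: "C > 0" "L > 0" "0 \<le> beta_weight \<alpha> p k" for p k
    using b1 b2 B by (simp_all add: C_def L_def beta_weight_def)
  show ?thesis
  proof (rule that)
    show "marg p \<alpha> k \<le> 2 * C * (real p + 1) powr (-\<alpha>)" if "k \<le> p" for p k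
      using mult_mono[OF R_le[of p k] beta_weight_le[OF assms that]] pos unfolding marg[OF that]
      by (simp add: mult_ac)
    show "L / (real p + 1) \<le> marg p \<alpha> k" if "k \<le> p" for p k
      using mult_mono[OF R_ge[of p k] beta_weight_ge[OF assms(2) that]] R_ge[of p k] pos unfolding marg[OF that]
      by simp
    show "L * (real p + 1) powr (-\<alpha>) \<le> marg p \<alpha> 0" for p
      using mult_right_mono[OF R_ge[of p 0] pos(3)[of p 0]] unfolding marg[OF le0] beta_weight_0 by simp
  qed (use pos in auto)
qed

section \<open>Shortest routes with at most one turn\<close>

definition unit_steps :: "(int \<times> int) set" where
  "unit_steps = {(1, 0), (-1, 0), (0, 1), (0, -1)}"

lemma adj_iff_unit_step: "adj u v \<longleftrightarrow> v - u \<in> unit_steps"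
  by (cases u; cases v) (auto simp: adj_def unit_steps_def abs_if split: if_splits)

definition route_step :: "vtx list \<Rightarrow> nat \<Rightarrow> int \<times> int" where
  "route_step vs t = vs ! (t + 1) - vs ! t"

definition turn_set :: "vtx list \<Rightarrow> nat set" where
  "turn_set vs = {k. 0 < k \<and> k + 1 < length vs \<and> route_step vs k \<noteq> route_step vs (k - 1)}"

lemma turns_eq_card_turn_set: "turns vs = card (turn_set vs)"
  unfolding turns_def turn_set_def route_step_def
  by (intro arg_cong[where f = card] Collect_cong) (auto simp: prod_eq_iff)

lemma finite_turn_set: "finite (turn_set vs)"
  by (rule finite_subset[of _ "{..<length vs}"]) (auto simp: turn_set_def)

lemma turn_set_between:
  "a < b \<Longrightarrow> b + 1 < length vs \<Longrightarrow> route_step vs a \<noteq> route_step vs b \<Longrightarrow>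
     \<exists>t \<in> turn_set vs. a < t \<and> t \<le> b"
proof (induction b)
  case 0
  then show ?case by simp
next
  case (Suc b)
  show ?case
  proof (cases "route_step vs b = route_step vs (Suc b)")
    case True
    with Suc.prems have "a < b"
      by (cases "a = b") auto
    with Suc True show ?thesis
      by force
  next
    case False
    then have "Suc b \<in> turn_set vs"
      using Suc.prems by (auto simp: turn_set_def)
    with Suc.prems show ?thesis
      by auto
  qed
qed

lemma route_step_if_turn_set_subset:
  assumes "turn_set vs \<subseteq> {m}" "t + 1 < length vs"
  shows "route_step vs t = (if t < m then route_step vs 0 else route_step vs m)"
proof (cases "t < m")
  case True
  with assms turn_set_between[of 0 t vs] show ?thesis
    by (cases "t = 0") fastforce+
next
  case False
  with assms turn_set_between[of m t vs] show ?thesis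
    by (cases "t = m") fastforce+
qed

lemma turn_set_subset_singleton:
  assumes "turns vs \<le> 1"
  obtains m where "turn_set vs \<subseteq> {m}"
proof -
  have "\<forall>a \<in> turn_set vs. \<forall>b \<in> turn_set vs. a = b"
    using assms card_le_Suc0_iff_eq[OF finite_turn_set] by (simp add: turns_eq_card_turn_set)
  then have "turn_set vs \<subseteq> {SOME k. k \<in> turn_set vs}"
    by (metis someI singleton_iff subsetI)
  then show thesis
    by (rule that)
qed

text \<open>Before the corner, \<open>k \<le> m\<close>, the truncated subtraction \<open>k - m\<close> is \<open>0\<close>.\<close>

definition corner_pt :: "vtx \<Rightarrow> nat \<Rightarrow> int \<times> int \<Rightarrow> int \<times> int \<Rightarrow> nat \<Rightarrow> vtx" where
  "corner_pt x m d1 d2 k = (fst x + int (min k m) * fst d1 + int (k - m) * fst d2,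
                            snd x + int (min k m) * snd d1 + int (k - m) * snd d2)"

definition corner_route :: "vtx \<Rightarrow> nat \<Rightarrow> int \<times> int \<Rightarrow> int \<times> int \<Rightarrow> nat \<Rightarrow> vtx list" where
  "corner_route x m d1 d2 n = map (corner_pt x m d1 d2) [0..<Suc n]"

lemma corner_pt_0 [simp]: "corner_pt x m d1 d2 0 = x"
  by (simp add: corner_pt_def)

lemma corner_pt_Suc: "corner_pt x m d1 d2 (Suc k) = corner_pt x m d1 d2 k + (if k < m then d1 else d2)"
  by (auto simp: corner_pt_def Suc_diff_le prod_eq_iff algebra_simps)

lemma length_corner_route [simp]: "length (corner_route x m d1 d2 n) = Suc n"
  by (simp add: corner_route_def)

lemma nth_corner_route: "k \<le> n \<Longrightarrow> corner_route x m d1 d2 n ! k = corner_pt x m d1 d2 k"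
  by (simp add: corner_route_def nth_map_upt del: upt_Suc)

lemma corner_route_ne [simp]: "corner_route x m d1 d2 n \<noteq> []"
  by (simp add: corner_route_def del: upt_Suc)

lemma last_corner_route [simp]: "last (corner_route x m d1 d2 n) = corner_pt x m d1 d2 n"
  by (simp add: last_conv_nth nth_corner_route)

lemma route_step_corner_route:
  "t < n \<Longrightarrow> route_step (corner_route x m d1 d2 n) t = (if t < m then d1 else d2)"
  by (simp add: route_step_def nth_corner_route corner_pt_Suc)

lemma turn_set_corner_route: "turn_set (corner_route x m d1 d2 n) \<subseteq> {m} \<inter> {0<..<n}"
  by (auto simp: turn_set_def route_step_corner_route split: if_splits)

lemma turns_corner_route_le_1: "turns (corner_route x m d1 d2 n) \<le> 1"
proof -
  have "turn_set (corner_route x m d1 d2 n) \<subseteq> {m}"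
    using turn_set_corner_route by blast
  then show ?thesis
    using card_mono[of "{m}"] by (simp add: turns_eq_card_turn_set)
qed

lemma route_eq_corner_route:
  assumes "vs \<noteq> []" "\<And>t. t + 1 < length vs \<Longrightarrow> route_step vs t = (if t < m then d1 else d2)"
  shows "vs = corner_route (hd vs) m d1 d2 (length vs - 1)"
proof -
  have "vs ! k = corner_pt (hd vs) m d1 d2 k" if "k < length vs" for k
    using that
  proof (induction k)
    case 0
    then show ?case using assms(1) by (simp add: hd_conv_nth)
  next
    case (Suc k)
    have "vs ! Suc k = vs ! k + route_step vs k"
      by (simp add: route_step_def)
    with Suc assms(2)[of k] show ?case
      by (simp add: corner_pt_Suc)
  qed
  then show ?thesis
    using assms(1) by (intro nth_equalityI) (auto simp: nth_corner_route)
qed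

lemma shortest_routesD:
  assumes "vs \<in> shortest_routes p x y"
  shows "vs \<noteq> []" "hd vs = x" "last vs = y" "length vs = Suc (l1dist x y)" "set vs \<subseteq> grid p"
    "\<And>t. t + 1 < length vs \<Longrightarrow> route_step vs t \<in> unit_steps"
  using assms by (auto simp: shortest_routes_def is_route_def route_step_def adj_iff_unit_step)

definition hv_route :: "vtx \<Rightarrow> vtx \<Rightarrow> vtx list" where
  "hv_route x y = corner_route x (nat \<bar>fst y - fst x\<bar>) (sgn (fst y - fst x), 0) (0, sgn (snd y - snd x)) (l1dist x y)"

definition vh_route :: "vtx \<Rightarrow> vtx \<Rightarrow> vtx list" where
  "vh_route x y = corner_route x (nat \<bar>snd y - snd x\<bar>) (0, sgn (snd y - snd x)) (sgn (fst y - fst x), 0) (l1dist x y)"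

lemma add_sgn_between:
  fixes a b j :: int
  assumes "0 \<le> j" "j \<le> \<bar>b - a\<bar>"
  shows "min a b \<le> a + j * sgn (b - a) \<and> a + j * sgn (b - a) \<le> max a b"
  using assms by (cases "a < b"; cases "a = b") (auto simp: sgn_if)

lemma hv_route_in_shortest_routes:
  assumes "x \<in> grid p" "y \<in> grid p"
  shows "hv_route x y \<in> shortest_routes p x y"
proof -
  define m where "m = nat \<bar>fst y - fst x\<bar>"
  define n where "n = l1dist x y"
  define pt where "pt = corner_pt x m (sgn (fst y - fst x), 0) (0, sgn (snd y - snd x))"
  have n: "n = m + nat \<bar>snd y - snd x\<bar>"
    by (simp add: n_def m_def l1dist_def nat_add_distrib)
  have route: "hv_route x y = map pt [0..<Suc n]"
    by (simp add: hv_route_def corner_route_def pt_def m_def n_def del: upt_Suc)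
  have "pt n = y"
    by (simp add: pt_def corner_pt_def n m_def abs_mult_sgn prod_eq_iff mult.commute)
  moreover have "pt k \<in> grid p" if "k \<le> n" for k
  proof -
    have "min (fst x) (fst y) \<le> fst (pt k) \<and> fst (pt k) \<le> max (fst x) (fst y)"
      unfolding pt_def corner_pt_def by (simp add: add_sgn_between m_def)
    moreover have "int (k - m) \<le> \<bar>snd y - snd x\<bar>"
      using that n by linarith
    then have "min (snd x) (snd y) \<le> snd (pt k) \<and> snd (pt k) \<le> max (snd x) (snd y)"
      unfolding pt_def corner_pt_def by (simp add: add_sgn_between)
    ultimately show ?thesis
      using assms by (cases "pt k") (auto simp: grid_def)
  qed
  moreover have "adj (pt k) (pt (Suc k))" if "k < n" for k
    using that n
    by (auto simp: pt_def corner_pt_Suc adj_iff_unit_step unit_steps_def m_def sgn_if)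
  ultimately show ?thesis
    unfolding shortest_routes_def is_route_def route
    by (auto simp: n_def hd_map last_map pt_def simp del: upt_Suc)
qed

lemma turns_hv_route_le_1: "turns (hv_route x y) \<le> 1"
  unfolding hv_route_def by (rule turns_corner_route_le_1)

lemma min_turn_route_turns_le_1:
  assumes "x \<in> grid p" "y \<in> grid p" "vs \<in> min_turn_routes p x y"
  shows "turns vs \<le> 1"
proof -
  have "turns vs \<le> turns (hv_route x y)"
    using assms(3) hv_route_in_shortest_routes[OF assms(1,2)] by (simp add: min_turn_routes_def)
  then show ?thesis
    using turns_hv_route_le_1[of x y] by linarith
qed

lemma min_turn_route_is_corner_route:
  assumes "x \<in> grid p" "y \<in> grid p" "vs \<in> min_turn_routes p x y"
  obtains m d1 d2 where "vs = corner_route x m d1 d2 (l1dist x y)"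
proof -
  obtain m where m: "turn_set vs \<subseteq> {m}"
    using turn_set_subset_singleton[OF min_turn_route_turns_le_1[OF assms]] .
  have sh: "vs \<in> shortest_routes p x y"
    using assms(3) by (simp add: min_turn_routes_def)
  have "vs = corner_route (hd vs) m (route_step vs 0) (route_step vs m) (length vs - 1)"
    using shortest_routesD(1)[OF sh] route_step_if_turn_set_subset[OF m] by (rule route_eq_corner_route)
  also have "\<dots> = corner_route x m (route_step vs 0) (route_step vs m) (l1dist x y)"
    using shortest_routesD[OF sh] by simp
  finally show thesis
    by (rule that)
qed

lemma horizontal_seg_on_endpoint_row:
  assumes "x \<in> grid p" "y \<in> grid p" "vs \<in> min_turn_routes p x y"
    and "(u, v) \<in> route_segs vs" "snd u = snd v"
  shows "snd u = snd x \<or> snd u = snd y"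
proof -
  define n where "n = l1dist x y"
  obtain m d1 d2 where vs: "vs = corner_route x m d1 d2 n"
    using min_turn_route_is_corner_route[OF assms(1-3)] n_def by blast
  have "y = corner_pt x m d1 d2 n"
    using shortest_routesD(3)[of vs p x y] assms(3) vs by (simp add: min_turn_routes_def)
  moreover obtain k where "k < n" "u = corner_pt x m d1 d2 k" "v = corner_pt x m d1 d2 (Suc k)"
    using assms(4) by (auto simp: route_segs_def vs nth_corner_route)
  ultimately show ?thesis
    using assms(5) by (cases "k < m") (auto simp: corner_pt_Suc corner_pt_def)
qed

lemma shortest_route_turns_pos:
  assumes "fst x \<noteq> fst y" "snd x \<noteq> snd y" "ws \<in> shortest_routes p x y"
  shows "1 \<le> turns ws"
proof (rule ccontr)
  assume "\<not> 1 \<le> turns ws"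
  then have "card (turn_set ws) = 0"
    by (simp add: turns_eq_card_turn_set)
  then have "turn_set ws = {}"
    using finite_turn_set[of ws] by simp
  then have "turn_set ws \<subseteq> {0}"
    by simp
  define d where "d = route_step ws 0"
  define n where "n = l1dist x y"
  have "ws = corner_route (hd ws) 0 d d (length ws - 1)"
    using shortest_routesD(1)[OF assms(3)] route_step_if_turn_set_subset[OF \<open>turn_set ws \<subseteq> {0}\<close>]
    unfolding d_def by (rule route_eq_corner_route)
  also have "\<dots> = corner_route x 0 d d n"
    using shortest_routesD[OF assms(3)] by (simp add: n_def)
  finally have "y = corner_pt x 0 d d n"
    using shortest_routesD(3)[OF assms(3)] by simp
  moreover have "0 < n"
    using assms(1) by (simp add: n_def l1dist_def)
  then have "d \<in> unit_steps"
    using shortest_routesD(4,6)[OF assms(3)] by (simp add: d_def n_def)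
  ultimately show False
    using assms(1,2) by (auto simp: unit_steps_def corner_pt_def)
qed

lemma hv_route_in_min_turn_routes:
  assumes "x \<in> grid p" "y \<in> grid p" "fst x \<noteq> fst y" "snd x \<noteq> snd y"
  shows "hv_route x y \<in> min_turn_routes p x y"
proof -
  have "turns (hv_route x y) \<le> turns ws" if "ws \<in> shortest_routes p x y" for ws
    using turns_hv_route_le_1[of x y] shortest_route_turns_pos[OF assms(3,4) that] by linarith
  then show ?thesis
    using hv_route_in_shortest_routes[OF assms(1,2)] by (simp add: min_turn_routes_def)
qed

lemma corner_steps_cases:
  fixes d1 d2 D :: "int \<times> int" and m n :: nat
  assumes "d1 \<in> unit_steps" "d2 \<in> unit_steps" "0 < m" "m < n"
    and "fst D = int m * fst d1 + int (n - m) * fst d2" "snd D = int m * snd d1 + int (n - m) * snd d2"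
    and "fst D \<noteq> 0" "snd D \<noteq> 0"
  shows "d1 = (sgn (fst D), 0) \<and> d2 = (0, sgn (snd D)) \<and> m = nat \<bar>fst D\<bar> \<or>
         d1 = (0, sgn (snd D)) \<and> d2 = (sgn (fst D), 0) \<and> m = nat \<bar>snd D\<bar>"
proof -
  have "int (n - m) > 0"
    using assms(4) by simp
  with assms show ?thesis
    unfolding unit_steps_def by (elim insertE emptyE) (auto simp: sgn_if)
qed

lemma min_turn_routes_subset:
  assumes "x \<in> grid p" "y \<in> grid p" "fst x \<noteq> fst y" "snd x \<noteq> snd y"
  shows "min_turn_routes p x y \<subseteq> {hv_route x y, vh_route x y}"
proof
  fix vs
  assume M: "vs \<in> min_turn_routes p x y"
  define n where "n = l1dist x y"
  obtain m d1 d2 where vs: "vs = corner_route x m d1 d2 n"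
    using min_turn_route_is_corner_route[OF assms(1,2) M] n_def by blast
  have sh: "vs \<in> shortest_routes p x y"
    using M by (simp add: min_turn_routes_def)
  have "turn_set vs \<noteq> {}"
    using shortest_route_turns_pos[OF assms(3,4) sh] by (auto simp: turns_eq_card_turn_set)
  then have m: "0 < m" "m < n"
    using turn_set_corner_route[of x m d1 d2 n] vs by auto
  have "route_step vs 0 \<in> unit_steps" "route_step vs (n - 1) \<in> unit_steps"
    using shortest_routesD(4,6)[OF sh] m by (simp_all add: n_def)
  moreover have "\<not> n - 1 < m"
    using m by arith
  ultimately have d: "d1 \<in> unit_steps" "d2 \<in> unit_steps"
    using m by (simp_all add: vs route_step_corner_route)
  have "y = corner_pt x m d1 d2 n"
    using shortest_routesD(3)[OF sh] by (simp add: vs)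
  then have D: "fst (y - x) = int m * fst d1 + int (n - m) * fst d2"
    "snd (y - x) = int m * snd d1 + int (n - m) * snd d2"
    using m by (simp_all add: corner_pt_def)
  have "d1 = (sgn (fst y - fst x), 0) \<and> d2 = (0, sgn (snd y - snd x)) \<and> m = nat \<bar>fst y - fst x\<bar> \<or>
      d1 = (0, sgn (snd y - snd x)) \<and> d2 = (sgn (fst y - fst x), 0) \<and> m = nat \<bar>snd y - snd x\<bar>"
    using corner_steps_cases[OF d m D] assms(3,4) by simp
  then show "vs \<in> {hv_route x y, vh_route x y}"
    by (auto simp: vs n_def hv_route_def vh_route_def)
qed

lemma horizontal_seg_in_hv_route:
  fixes a b c i j e :: int
  assumes "e = 1 \<or> e = -1" "0 \<le> e * (i - a)" "1 \<le> e * (b - i)"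
  shows "((i, j), (i + e, j)) \<in> route_segs (hv_route (a, j) (b, c))"
proof -
  define m where "m = nat \<bar>b - a\<bar>"
  define k where "k = nat (e * (i - a))"
  define n where "n = l1dist (a, j) (b, c)"
  have "sgn (b - a) = e" "k < m" "m \<le> n"
    using assms by (auto simp: m_def k_def n_def l1dist_def sgn_if)
  moreover have "corner_pt (a, j) m (e, 0) (0, sgn (c - j)) k = (i, j)"
    using \<open>k < m\<close> assms by (auto simp: corner_pt_def k_def)
  ultimately show ?thesis
    unfolding route_segs_def hv_route_def
    by (intro CollectI exI[of _ k]) (auto simp: nth_corner_route corner_pt_Suc m_def n_def)
qed

section \<open>Conditional probability of a segment given the endpoints\<close>

definition route_frac :: "nat \<Rightarrow> vtx \<times> vtx \<Rightarrow> vtx \<Rightarrow> vtx \<Rightarrow> real" where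
  "route_frac p s x y =
     real (card {vs \<in> min_turn_routes p x y. s \<in> route_segs vs}) / real (card (min_turn_routes p x y))"

lemma seg_prob_eq_route_frac:
  "seg_prob p \<alpha> s =
     (\<Sum>x\<in>grid p. \<Sum>y\<in>grid p. endpoint_prob p \<alpha> x * endpoint_prob p \<alpha> y * route_frac p s x y)"
  by (simp add: seg_prob_def route_frac_def)

lemma route_frac_nonneg: "0 \<le> route_frac p s x y"
  by (simp add: route_frac_def)

lemma route_frac_le_1: "route_frac p s x y \<le> 1"
proof (cases "finite (min_turn_routes p x y)")
  case True
  then have "card {vs \<in> min_turn_routes p x y. s \<in> route_segs vs} \<le> card (min_turn_routes p x y)"
    by (intro card_mono) auto
  then show ?thesis
    by (auto simp: route_frac_def divide_le_eq_1)
next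
  case False
  then show ?thesis
    by (simp add: route_frac_def)
qed

lemma route_frac_eq_0:
  assumes "\<And>vs. vs \<in> min_turn_routes p x y \<Longrightarrow> s \<notin> route_segs vs"
  shows "route_frac p s x y = 0"
proof -
  have empty: "{vs \<in> min_turn_routes p x y. s \<in> route_segs vs} = {}"
    using assms by blast
  show ?thesis
    unfolding route_frac_def empty by simp
qed

lemma route_frac_ge_half:
  assumes "x \<in> grid p" "y \<in> grid p" "fst x \<noteq> fst y" "snd x \<noteq> snd y" "s \<in> route_segs (hv_route x y)"
  shows "1 / 2 \<le> route_frac p s x y"
proof -
  let ?M = "min_turn_routes p x y"
  have sub: "?M \<subseteq> {hv_route x y, vh_route x y}"
    by (rule min_turn_routes_subset[OF assms(1-4)])
  then have fin: "finite ?M"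
    by (rule finite_subset) simp
  have "card ?M \<le> 2"
    using card_mono[OF _ sub] by (simp add: card_insert_if split: if_split_asm)
  moreover have "{vs \<in> ?M. s \<in> route_segs vs} \<noteq> {}"
    using hv_route_in_min_turn_routes[OF assms(1-4)] assms(5) by blast
  then have "1 \<le> card {vs \<in> ?M. s \<in> route_segs vs}"
    using fin by (simp add: Suc_le_eq card_gt_0_iff)
  moreover have "card {vs \<in> ?M. s \<in> route_segs vs} \<le> card ?M"
    using fin by (intro card_mono) auto
  ultimately show ?thesis
    unfolding route_frac_def by (simp add: le_divide_eq)
qed

section \<open>Swapping the coordinates\<close>

definition swap_seg :: "vtx \<times> vtx \<Rightarrow> vtx \<times> vtx" where
  "swap_seg = map_prod prod.swap prod.swap"

lemma swap_seg_swap_seg [simp]: "swap_seg (swap_seg s) = s"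
  by (simp add: swap_seg_def prod.map_comp map_prod.id)

lemma swap_eq_swap_iff [simp]: "prod.swap u = prod.swap v \<longleftrightarrow> u = v"
  by (rule inj_eq[OF inj_swap])

lemma swap_in_grid [simp]: "prod.swap x \<in> grid p \<longleftrightarrow> x \<in> grid p"
  by (cases x) (auto simp: grid_def)

lemma adj_swap [simp]: "adj (prod.swap u) (prod.swap v) \<longleftrightarrow> adj u v"
  by (simp add: adj_def add.commute)

lemma l1dist_swap [simp]: "l1dist (prod.swap x) (prod.swap y) = l1dist x y"
  by (simp add: l1dist_def add.commute)

lemma is_route_swap: "is_route p (prod.swap x) (prod.swap y) (map prod.swap vs) \<longleftrightarrow> is_route p x y vs"
proof -
  have "set (map prod.swap vs) \<subseteq> grid p \<longleftrightarrow> set vs \<subseteq> grid p"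
    by (auto simp: grid_def)
  then show ?thesis
    by (cases "vs = []") (auto simp: is_route_def hd_map last_map)
qed

lemma turns_swap: "turns (map prod.swap vs) = turns vs"
  unfolding turns_def by (intro arg_cong[where f = card] Collect_cong) (auto simp: prod_eq_iff)

lemma map_swap_in_shortest_routes:
  "map prod.swap vs \<in> shortest_routes p x y \<longleftrightarrow> vs \<in> shortest_routes p (prod.swap x) (prod.swap y)"
  using is_route_swap[of p "prod.swap x" "prod.swap y" vs] by (simp add: shortest_routes_def)

lemma map_swap_in_min_turn_routes:
  "map prod.swap vs \<in> min_turn_routes p x y \<longleftrightarrow> vs \<in> min_turn_routes p (prod.swap x) (prod.swap y)"
proof -
  have "(\<forall>ws \<in> shortest_routes p x y. P ws) \<longleftrightarrow>
        (\<forall>ws \<in> shortest_routes p (prod.swap x) (prod.swap y). P (map prod.swap ws))" for P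
    by (metis map_swap_in_shortest_routes list.map_comp list.map_id swap_comp_swap)
  then show ?thesis
    by (simp add: min_turn_routes_def map_swap_in_shortest_routes turns_swap)
qed

lemma route_segs_swap: "route_segs (map prod.swap vs) = swap_seg ` route_segs vs"
  by (force simp: route_segs_def swap_seg_def)

lemma card_swap_routes:
  "card {vs \<in> min_turn_routes p (prod.swap x) (prod.swap y). P (map prod.swap vs)} =
   card {vs \<in> min_turn_routes p x y. P vs}"
  by (rule bij_betw_same_card[of "map prod.swap"], rule bij_betw_byWitness[where f' = "map prod.swap"])
    (auto simp: map_swap_in_min_turn_routes[symmetric] list.map_comp)

lemma route_frac_swap: "route_frac p (swap_seg s) (prod.swap x) (prod.swap y) = route_frac p s x y"
proof -
  have "swap_seg s \<in> route_segs vs \<longleftrightarrow> s \<in> route_segs (map prod.swap vs)" for vs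
    by (metis route_segs_swap image_iff swap_seg_swap_seg)
  then show ?thesis
    using card_swap_routes[of p x y "\<lambda>_. True"] card_swap_routes[of p x y "\<lambda>vs. s \<in> route_segs vs"]
    by (simp add: route_frac_def)
qed

lemma sum_grid_swap: "(\<Sum>x\<in>grid p. f (prod.swap x)) = (\<Sum>x\<in>grid p. f x)"
  by (rule sum.reindex_bij_witness[where i = prod.swap and j = prod.swap]) auto

lemma endpoint_prob_swap [simp]: "endpoint_prob p \<alpha> (prod.swap x) = endpoint_prob p \<alpha> x"
  by (simp add: endpoint_prob_def)

lemma seg_prob_swap: "seg_prob p \<alpha> (swap_seg s) = seg_prob p \<alpha> s"
proof -
  let ?F = "\<lambda>x y. endpoint_prob p \<alpha> x * endpoint_prob p \<alpha> y * route_frac p s x y"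
  have "seg_prob p \<alpha> (swap_seg s) = (\<Sum>x\<in>grid p. \<Sum>y\<in>grid p. ?F (prod.swap x) (prod.swap y))"
    using route_frac_swap[of p "swap_seg s"] by (simp add: seg_prob_eq_route_frac)
  also have "\<dots> = (\<Sum>x\<in>grid p. \<Sum>y\<in>grid p. ?F (prod.swap x) y)"
    by (intro sum.cong refl sum_grid_swap)
  also have "\<dots> = seg_prob p \<alpha> s"
    unfolding seg_prob_eq_route_frac by (rule sum_grid_swap)
  finally show ?thesis .
qed

lemma segment_cases:
  assumes "s \<in> segments p"
  obtains i j e where "e = 1 \<or> e = -1" "((i, j), (i + e, j)) \<in> segments p"
    "s = ((i, j), (i + e, j)) \<or> s = swap_seg ((i, j), (i + e, j))"
proof -
  obtain i j i' j' where s: "s = ((i, j), (i', j'))" "(i, j) \<in> grid p" "(i', j') \<in> grid p"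
    "\<bar>i - i'\<bar> + \<bar>j - j'\<bar> = 1"
    using assms by (auto simp: segments_def adj_def)
  then consider "j' = j" "i' - i = 1 \<or> i' - i = -1" | "i' = i" "j' - j = 1 \<or> j' - j = -1"
    by arith
  then show ?thesis
  proof cases
    case 1
    show ?thesis
      by (rule that[of "i' - i" i j]) (use 1 s in \<open>auto simp: segments_def adj_def\<close>)
  next
    case 2
    show ?thesis
      by (rule that[of "j' - j" j i]) (use 2 s in \<open>auto simp: segments_def adj_def swap_seg_def grid_def\<close>)
  qed
qed

lemma seg_prob_eq_horizontal:
  assumes "s \<in> segments p"
  obtains i j e where "e = 1 \<or> e = -1" "((i, j), (i + e, j)) \<in> segments p"
    "seg_prob p \<alpha> s = seg_prob p \<alpha> ((i, j), (i + e, j))"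
proof -
  obtain i j e where "e = 1 \<or> e = -1" "((i, j), (i + e, j)) \<in> segments p"
    "s = ((i, j), (i + e, j)) \<or> s = swap_seg ((i, j), (i + e, j))"
    using segment_cases[OF assms] .
  then show thesis
    using that seg_prob_swap by blast
qed

section \<open>Bounds on the segment probability\<close>

lemma sum_grid: "(\<Sum>x\<in>grid p. g x) = (\<Sum>a\<le>p. \<Sum>b\<le>p. g (int a, int b))"
proof -
  have "grid p = (\<lambda>(a, b). (int a, int b)) ` ({..p} \<times> {..p})"
  proof (intro subset_antisym subsetI)
    fix z
    assume "z \<in> grid p"
    then show "z \<in> (\<lambda>(a, b). (int a, int b)) ` ({..p} \<times> {..p})"
      by (intro image_eqI[of _ _ "(nat (fst z), nat (snd z))"]) (auto simp: grid_def)
  qed (auto simp: grid_def)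
  moreover have "inj_on (\<lambda>(a, b). (int a, int b)) ({..p} \<times> {..p})"
    by (auto simp: inj_on_def)
  ultimately show ?thesis
    by (simp add: sum.reindex sum.cartesian_product split_def)
qed

lemma endpoint_prob_nonneg: "\<alpha> > 0 \<Longrightarrow> x \<in> grid p \<Longrightarrow> 0 \<le> endpoint_prob p \<alpha> x"
  by (auto simp: endpoint_prob_def grid_def intro!: mult_nonneg_nonneg marg_nonneg)

lemma sum_endpoint_prob: "\<alpha> > 0 \<Longrightarrow> (\<Sum>x\<in>grid p. endpoint_prob p \<alpha> x) = 1"
  by (simp add: sum_grid endpoint_prob_def sum_product[symmetric] sum_marg)

lemma sum_endpoint_prob_row:
  assumes "\<alpha> > 0" "0 \<le> r" "r \<le> int p"
  shows "(\<Sum>x\<in>grid p. if snd x = r then endpoint_prob p \<alpha> x else 0) = marg p \<alpha> (nat r)"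
proof -
  have "(\<Sum>x\<in>grid p. if snd x = r then endpoint_prob p \<alpha> x else 0)
      = (\<Sum>a\<le>p. \<Sum>b\<le>p. if b = nat r then marg p \<alpha> a * marg p \<alpha> b else 0)"
    unfolding sum_grid using assms(2) by (intro sum.cong refl) (auto simp: endpoint_prob_def)
  also have "\<dots> = (\<Sum>a\<le>p. marg p \<alpha> a) * marg p \<alpha> (nat r)"
    using assms(3) by (simp add: sum.delta' sum_distrib_right nat_le_iff)
  finally show ?thesis
    using assms(1) by (simp add: sum_marg)
qed

lemma seg_prob_le_row:
  assumes "\<alpha> > 0" "0 \<le> r" "r \<le> int p"
    and "\<And>x y. x \<in> grid p \<Longrightarrow> y \<in> grid p \<Longrightarrow> snd x \<noteq> r \<Longrightarrow> snd y \<noteq> r \<Longrightarrow> route_frac p s x y = 0"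
  shows "seg_prob p \<alpha> s \<le> 2 * marg p \<alpha> (nat r)"
proof -
  let ?e = "endpoint_prob p \<alpha>"
  let ?row = "\<lambda>x. if snd x = r then ?e x else 0"
  have "?e x * ?e y * route_frac p s x y \<le> ?row x * ?e y + ?e x * ?row y"
    if "x \<in> grid p" "y \<in> grid p" for x y
  proof (cases "snd x = r \<or> snd y = r")
    case True
    have e: "0 \<le> ?e x" "0 \<le> ?e y"
      using endpoint_prob_nonneg[OF assms(1)] that by auto
    have "?e x * ?e y * route_frac p s x y \<le> ?e x * ?e y"
      using e route_frac_le_1 by (intro mult_left_le) auto
    moreover have "?e x * ?e y \<le> ?row x * ?e y + ?e x * ?row y"
      using True e by auto
    ultimately show ?thesis
      by linarith
  next
    case False
    then show ?thesis
      using assms(4)[OF that] by simp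
  qed
  then have "seg_prob p \<alpha> s \<le> (\<Sum>x\<in>grid p. \<Sum>y\<in>grid p. ?row x * ?e y + ?e x * ?row y)"
    unfolding seg_prob_eq_route_frac by (intro sum_mono) auto
  also have "\<dots> = 2 * marg p \<alpha> (nat r)"
    using assms(1-3)
    by (simp add: sum.distrib sum_distrib_left[symmetric] sum_distrib_right[symmetric]
        sum_endpoint_prob sum_endpoint_prob_row)
  finally show ?thesis .
qed

lemma seg_prob_horizontal_le:
  assumes "\<alpha> > 0" "((i, j), (i + e, j)) \<in> segments p"
  shows "seg_prob p \<alpha> ((i, j), (i + e, j)) \<le> 2 * marg p \<alpha> (nat j)"
proof (rule seg_prob_le_row[OF assms(1)])
  show "0 \<le> j" "j \<le> int p"
    using assms(2) by (auto simp: segments_def grid_def)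
  show "route_frac p ((i, j), (i + e, j)) x y = 0"
    if "x \<in> grid p" "y \<in> grid p" "snd x \<noteq> j" "snd y \<noteq> j" for x y
    using horizontal_seg_on_endpoint_row[OF that(1,2)] that(3,4) by (intro route_frac_eq_0) fastforce
qed

lemma seg_prob_ge_product:
  assumes "\<alpha> > 0" "j \<le> p" "A \<subseteq> {..p}" "B \<subseteq> {..p}" "C \<subseteq> {..p}"
    and "\<And>a b c. a \<in> A \<Longrightarrow> b \<in> B \<Longrightarrow> c \<in> C \<Longrightarrow> 1 / 2 \<le> route_frac p s (int a, int j) (int b, int c)"
  shows "1 / 2 * marg p \<alpha> j * (\<Sum>a\<in>A. marg p \<alpha> a) * (\<Sum>b\<in>B. marg p \<alpha> b) * (\<Sum>c\<in>C. marg p \<alpha> c)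
           \<le> seg_prob p \<alpha> s"
proof -
  let ?e = "endpoint_prob p \<alpha>"
  let ?F = "\<lambda>x y. ?e x * ?e y * route_frac p s x y"
  define X where "X = (\<lambda>a. (int a, int j)) ` A"
  define Y where "Y = (\<lambda>(b, c). (int b, int c)) ` (B \<times> C)"
  have XY: "X \<subseteq> grid p" "Y \<subseteq> grid p"
    using assms(2-5) by (auto simp: X_def Y_def grid_def)
  have e: "0 \<le> ?e x" if "x \<in> grid p" for x
    using endpoint_prob_nonneg[OF assms(1) that] .
  have F: "0 \<le> ?F x y" if "x \<in> grid p" "y \<in> grid p" for x y
    using e[OF that(1)] e[OF that(2)] route_frac_nonneg by simp
  have X: "(\<Sum>x\<in>X. ?e x) = marg p \<alpha> j * (\<Sum>a\<in>A. marg p \<alpha> a)"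
    by (simp add: X_def sum.reindex inj_on_def endpoint_prob_def sum_distrib_left mult.commute)
  have Y: "(\<Sum>y\<in>Y. ?e y) = (\<Sum>b\<in>B. marg p \<alpha> b) * (\<Sum>c\<in>C. marg p \<alpha> c)"
    by (simp add: Y_def sum.reindex inj_on_def endpoint_prob_def sum.cartesian_product sum_product split_def)
  have "1 / 2 * marg p \<alpha> j * (\<Sum>a\<in>A. marg p \<alpha> a) * (\<Sum>b\<in>B. marg p \<alpha> b) * (\<Sum>c\<in>C. marg p \<alpha> c)
      = (\<Sum>x\<in>X. ?e x) * (\<Sum>y\<in>Y. ?e y) * (1 / 2)"
    unfolding X Y by (simp add: mult_ac)
  also have "\<dots> = (\<Sum>x\<in>X. \<Sum>y\<in>Y. ?e x * ?e y * (1 / 2))"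
    by (subst sum_product) (simp add: sum_distrib_right)
  also have "\<dots> \<le> (\<Sum>x\<in>X. \<Sum>y\<in>Y. ?F x y)"
  proof (intro sum_mono mult_left_mono)
    fix x y
    assume "x \<in> X" "y \<in> Y"
    then show "1 / 2 \<le> route_frac p s x y"
      using assms(6) by (auto simp: X_def Y_def)
    have "x \<in> grid p" "y \<in> grid p"
      using XY \<open>x \<in> X\<close> \<open>y \<in> Y\<close> by auto
    then show "0 \<le> ?e x * ?e y"
      using e by simp
  qed
  also have "\<dots> \<le> (\<Sum>x\<in>X. \<Sum>y\<in>grid p. ?F x y)"
    using XY F by (intro sum_mono sum_mono2) (auto simp: grid_def)
  also have "\<dots> \<le> (\<Sum>x\<in>grid p. \<Sum>y\<in>grid p. ?F x y)"
    using XY F by (intro sum_mono2 sum_nonneg) (auto simp: grid_def)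
  finally show ?thesis
    by (simp add: seg_prob_eq_route_frac)
qed

lemma seg_prob_horizontal_ge:
  assumes "\<alpha> > 0" "e = 1 \<or> e = -1" "((i, j), (i + e, j)) \<in> segments p"
  shows "1 / 2 * marg p \<alpha> (nat j) * (\<Sum>a | a \<le> p \<and> 0 \<le> e * (i - int a). marg p \<alpha> a)
           * (\<Sum>b | b \<le> p \<and> 1 \<le> e * (int b - i). marg p \<alpha> b) * (\<Sum>c\<in>{..p} - {nat j}. marg p \<alpha> c)
         \<le> seg_prob p \<alpha> ((i, j), (i + e, j))"
proof (rule seg_prob_ge_product[OF assms(1)])
  have ij: "0 \<le> i" "0 \<le> j" "j \<le> int p"
    using assms(3) by (auto simp: segments_def grid_def)
  then show "nat j \<le> p"
    by simp
  show "{a. a \<le> p \<and> 0 \<le> e * (i - int a)} \<subseteq> {..p}" "{b. b \<le> p \<and> 1 \<le> e * (int b - i)} \<subseteq> {..p}"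
    "{..p} - {nat j} \<subseteq> {..p}"
    by auto
  fix a b c
  assume a: "a \<in> {a. a \<le> p \<and> 0 \<le> e * (i - int a)}" and b: "b \<in> {b. b \<le> p \<and> 1 \<le> e * (int b - i)}"
    and c: "c \<in> {..p} - {nat j}"
  have "int a \<noteq> int b" "int (nat j) \<noteq> int c"
    using a b c assms(2) ij by auto
  moreover have "((i, j), (i + e, j)) \<in> route_segs (hv_route (int a, j) (int b, int c))"
    using a b assms(2) by (intro horizontal_seg_in_hv_route) auto
  ultimately show "1 / 2 \<le> route_frac p ((i, j), (i + e, j)) (int a, int (nat j)) (int b, int c)"
    using a b c ij by (intro route_frac_ge_half) (auto simp: grid_def)
qed

lemma sum_ge_half_of_uniform_bound:
  fixes f :: "nat \<Rightarrow> real"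
  assumes "\<And>k. k \<le> p \<Longrightarrow> L / (real p + 1) \<le> f k" "0 \<le> L" "A \<subseteq> {..p}" "p + 1 \<le> 2 * card A"
  shows "L / 2 \<le> (\<Sum>a\<in>A. f a)"
proof -
  have "real p + 1 \<le> 2 * real (card A)"
    using assms(4) by linarith
  then have "L * (real p + 1) \<le> L * (2 * real (card A))"
    using assms(2) by (rule mult_left_mono)
  then have "L / 2 \<le> real (card A) * (L / (real p + 1))"
    by (simp add: field_simps)
  also have "\<dots> = (\<Sum>a\<in>A. L / (real p + 1))"
    by simp
  also have "\<dots> \<le> (\<Sum>a\<in>A. f a)"
    using assms(1,3) by (intro sum_mono) auto
  finally show ?thesis .
qed

lemma split_sum_product_ge:
  fixes f :: "nat \<Rightarrow> real"
  assumes "\<And>k. k \<le> p \<Longrightarrow> 0 \<le> f k" "\<And>k. k \<le> p \<Longrightarrow> L / (real p + 1) \<le> f k" "0 \<le> L"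
    and "E \<le> f 0" "E \<le> f p" "A \<union> B = {..p}" "A \<inter> B = {}" "0 \<in> A \<longleftrightarrow> p \<in> B"
  shows "L / 2 * E \<le> (\<Sum>a\<in>A. f a) * (\<Sum>b\<in>B. f b)"
proof -
  have fin: "finite A" "finite B"
    using assms(6) by (metis finite_Un finite_atMost)+
  have "card A + card B = p + 1"
    using card_Un_disjoint[OF fin assms(7)] assms(6) by simp
  have *: "L / 2 * E \<le> (\<Sum>a\<in>A'. f a) * (\<Sum>b\<in>B'. f b)"
    if "A' \<union> B' = {..p}" "p + 1 \<le> 2 * card A'" "q \<in> B'" "E \<le> f q" for A' B' q
  proof -
    have "L / 2 \<le> (\<Sum>a\<in>A'. f a)"
      using that(1,2) assms(2,3) by (intro sum_ge_half_of_uniform_bound) auto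
    moreover have "E \<le> (\<Sum>b\<in>B'. f b)"
      using that assms(1) by (intro order_trans[OF _ member_le_sum]) (auto intro: finite_subset)
    moreover have "0 \<le> (\<Sum>b\<in>B'. f b)"
      using that(1) assms(1) by (intro sum_nonneg) auto
    ultimately show ?thesis
      using assms(3) mult_left_mono[of E "sum f B'" "L / 2"] mult_right_mono[of "L / 2" "sum f A'" "sum f B'"]
      by linarith
  qed
  consider "p + 1 \<le> 2 * card A" | "p + 1 \<le> 2 * card B"
    using \<open>card A + card B = p + 1\<close> by linarith
  then show ?thesis
  proof cases
    case 1
    then show ?thesis
      using *[OF assms(6) 1] assms(4,5,6,8) by (cases "0 \<in> A") auto
  next
    case 2
    have "B \<union> A = {..p}"
      using assms(6) by blast
    then have "L / 2 * E \<le> (\<Sum>b\<in>B. f b) * (\<Sum>a\<in>A. f a)"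
      using *[of B A] 2 assms(4,5,6,7,8) by (cases "0 \<in> A") auto
    then show ?thesis
      by (simp only: mult.commute)
  qed
qed

lemma segments_imp_pos: "s \<in> segments p \<Longrightarrow> 1 \<le> p"
  by (cases p) (auto simp: segments_def grid_def adj_def)

lemma powr_Suc_ge:
  fixes \<beta> :: real
  assumes "1 \<le> p" "0 \<le> \<beta>" "\<beta> \<le> 2"
  shows "real p powr (-\<beta>) / 4 \<le> (real p + 1) powr (-\<beta>)"
proof -
  have "real p powr (-\<beta>) / 4 = 2 powr (-2) * real p powr (-\<beta>)"
    by (simp add: powr_minus_divide)
  also have "\<dots> \<le> 2 powr (-\<beta>) * real p powr (-\<beta>)"
    using assms(3) by (intro mult_right_mono powr_mono) auto
  also have "\<dots> = (2 * real p) powr (-\<beta>)"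
    by (simp add: powr_mult)
  also have "\<dots> \<le> (real p + 1) powr (-\<beta>)"
    using assms by (intro powr_mono2') auto
  finally show ?thesis .
qed

lemma seg_prob_upper_bound:
  assumes "\<alpha> > 0" "K \<ge> 0" "\<And>p k. k \<le> p \<Longrightarrow> marg p \<alpha> k \<le> K * (real p + 1) powr (-\<alpha>)"
    and "s \<in> segments p"
  shows "seg_prob p \<alpha> s \<le> 2 * K * real p powr (-\<alpha>)"
proof -
  obtain i j e where seg: "((i, j), (i + e, j)) \<in> segments p"
    and eq: "seg_prob p \<alpha> s = seg_prob p \<alpha> ((i, j), (i + e, j))"
    using seg_prob_eq_horizontal[OF assms(4)] by metis
  have "nat j \<le> p"
    using seg by (auto simp: segments_def grid_def)
  have "(real p + 1) powr (-\<alpha>) \<le> real p powr (-\<alpha>)"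
    using segments_imp_pos[OF assms(4)] assms(1) by (intro powr_mono2') auto
  then have "marg p \<alpha> (nat j) \<le> K * real p powr (-\<alpha>)"
    using assms(3)[OF \<open>nat j \<le> p\<close>] assms(2) by (meson mult_left_mono order_trans)
  then show ?thesis
    using seg_prob_horizontal_le[OF assms(1) seg] eq by linarith
qed

lemma mult_mono3:
  fixes a b c a' b' c' :: real
  assumes "a \<le> a'" "b \<le> b'" "c \<le> c'" "0 \<le> a" "0 \<le> b" "0 \<le> c"
  shows "a * b * c \<le> a' * b' * c'"
  using assms by (meson mult_mono mult_nonneg_nonneg order_trans)

lemma seg_prob_horizontal_lower_bound:
  assumes "\<alpha> > 0" "L > 0"
    and "\<And>k. k \<le> p \<Longrightarrow> L / (real p + 1) \<le> marg p \<alpha> k"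
    and "L * (real p + 1) powr (-\<alpha>) \<le> marg p \<alpha> 0"
    and "e = 1 \<or> e = -1" "((i, j), (i + e, j)) \<in> segments p"
  shows "L ^ 4 / 8 * (real p + 1) powr (-1 - \<alpha>) \<le> seg_prob p \<alpha> ((i, j), (i + e, j))"
proof -
  have ij: "0 \<le> i" "i \<le> int p" "0 \<le> i + e" "i + e \<le> int p" "0 \<le> j" "j \<le> int p"
    using assms(6) by (auto simp: segments_def grid_def)
  define A where "A = {a. a \<le> p \<and> 0 \<le> e * (i - int a)}"
  define B where "B = {b. b \<le> p \<and> 1 \<le> e * (int b - i)}"
  define C where "C = {..p} - {nat j}"
  let ?m = "marg p \<alpha>"
  let ?E = "L * (real p + 1) powr (-\<alpha>)"
  have m: "0 \<le> ?m k" "L / (real p + 1) \<le> ?m k" if "k \<le> p" for k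
    using marg_nonneg[OF assms(1) that] assms(3)[OF that] by auto
  have "?E \<le> ?m p"
    using assms(4) marg_symmetric[of 0 p \<alpha>] by simp
  moreover have "A \<union> B = {..p}" "A \<inter> B = {}" "0 \<in> A \<longleftrightarrow> p \<in> B"
    using assms(5) ij by (auto simp: A_def B_def)
  ultimately have AB: "L / 2 * ?E \<le> (\<Sum>a\<in>A. ?m a) * (\<Sum>b\<in>B. ?m b)"
    using m assms(2,4) by (intro split_sum_product_ge) auto
  have "card C = p" "1 \<le> p"
    using ij segments_imp_pos[OF assms(6)] by (simp_all add: C_def)
  then have SC: "L / 2 \<le> (\<Sum>c\<in>C. ?m c)"
    using m(2) assms(2) by (intro sum_ge_half_of_uniform_bound) (auto simp: C_def)
  have "L ^ 4 / 8 * (real p + 1) powr (-1 - \<alpha>) = 1 / 2 * (L / (real p + 1) * (L / 2 * ?E) * (L / 2))"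
    by (simp add: powr_diff powr_minus_divide field_simps power4_eq_xxxx)
  also have "\<dots> \<le> 1 / 2 * (?m (nat j) * ((\<Sum>a\<in>A. ?m a) * (\<Sum>b\<in>B. ?m b)) * (\<Sum>c\<in>C. ?m c))"
    using m[of "nat j"] ij assms(2) by (intro mult_left_mono mult_mono3[OF _ AB SC]) auto
  also have "\<dots> \<le> seg_prob p \<alpha> ((i, j), (i + e, j))"
    using seg_prob_horizontal_ge[OF assms(1,5,6)] by (simp add: A_def B_def C_def mult.assoc)
  finally show ?thesis .
qed

lemma seg_prob_lower_bound:
  assumes "0 < \<alpha>" "\<alpha> \<le> 1" "L > 0"
    and "\<And>p k. k \<le> p \<Longrightarrow> L / (real p + 1) \<le> marg p \<alpha> k"
    and "\<And>p. L * (real p + 1) powr (-\<alpha>) \<le> marg p \<alpha> 0"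
    and "s \<in> segments p"
  shows "L ^ 4 / 32 * real p powr (-1 - \<alpha>) \<le> seg_prob p \<alpha> s"
proof -
  obtain i j e where "e = 1 \<or> e = -1" "((i, j), (i + e, j)) \<in> segments p"
    and eq: "seg_prob p \<alpha> s = seg_prob p \<alpha> ((i, j), (i + e, j))"
    using seg_prob_eq_horizontal[OF assms(6)] by metis
  then have "L ^ 4 / 8 * (real p + 1) powr (-1 - \<alpha>) \<le> seg_prob p \<alpha> s"
    using seg_prob_horizontal_lower_bound[OF assms(1,3,4,5)] by simp
  moreover have "real p powr (-1 - \<alpha>) / 4 \<le> (real p + 1) powr (-1 - \<alpha>)"
    using powr_Suc_ge[of p "1 + \<alpha>"] segments_imp_pos[OF assms(6)] assms(1,2) by simp
  then have "L ^ 4 / 8 * (real p powr (-1 - \<alpha>) / 4) \<le> L ^ 4 / 8 * (real p + 1) powr (-1 - \<alpha>)"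
    by (rule mult_left_mono) simp
  ultimately show ?thesis
    by simp
qed

theorem propositionA5:
  fixes \<alpha> :: real
  assumes "0 < \<alpha>" and "\<alpha> \<le> 1"
  shows "\<exists>c1 > 0. \<exists>c2 > 0. \<forall>p::nat. \<forall>s \<in> segments p.
           c1 * real p powr (-1 - \<alpha>) \<le> seg_prob p \<alpha> s \<and>
           seg_prob p \<alpha> s \<le> c2 * real p powr (-\<alpha>)"
proof -
  obtain K L where "K > 0" "L > 0"
    and upper: "\<And>p k. k \<le> p \<Longrightarrow> marg p \<alpha> k \<le> K * (real p + 1) powr (-\<alpha>)"
    and lower: "\<And>p k. k \<le> p \<Longrightarrow> L / (real p + 1) \<le> marg p \<alpha> k"
    and lower_0: "\<And>p. L * (real p + 1) powr (-\<alpha>) \<le> marg p \<alpha> 0"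
    using marg_bounds[OF assms] by blast
  have "L ^ 4 / 32 * real p powr (-1 - \<alpha>) \<le> seg_prob p \<alpha> s \<and> seg_prob p \<alpha> s \<le> 2 * K * real p powr (-\<alpha>)"
    if "s \<in> segments p" for p s
    using seg_prob_lower_bound[OF assms \<open>L > 0\<close> lower lower_0 that]
      seg_prob_upper_bound[OF assms(1) _ upper that] \<open>K > 0\<close> by simp
  moreover have "L ^ 4 / 32 > 0" "2 * K > 0"
    using \<open>K > 0\<close> \<open>L > 0\<close> by simp_all
  ultimately show ?thesis
    by blast
qed

end
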